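(* Let $f,\beta_{(-1)},\beta_{(0)},\beta_{(1)}\in\mathbb{C}[x]$ be nonzero polynomials satisfying \[ f(x+1)\beta_{(1)}(x)+f(x)\beta_{(0)}(x)+f(x-1)\beta_{(-1)}(x)=0. \] Let $d_{f}=\deg(f)$, $d=\max\{\deg(\beta_{(i)}) : i=-1,0,1\}$, and write $\beta_{(i)}(x)=\sum_{j=0}^{d}\beta_{(i)}^{(j)}x^{j}$ with $\beta_{(i)}^{(j)}\in\mathbb{C}$ (with the convention $\beta_{(i)}^{(j)}=0$ for $j<0$). Then: (1) $\beta_{(-1)}^{(d)}+\beta_{(0)}^{(d)}+\beta_{(1)}^{(d)}=0$; in particular at least two of the $\beta_{(i)}$ have degree $d$. (2) If $\beta_{(-1)}^{(d)}-\beta_{(1)}^{(d)}\neq0$, then \[ d_{f}=\frac{\beta_{(-1)}^{(d-1)}+\beta_{(0)}^{(d-1)}+\beta_{(1)}^{(d-1)}}{\beta_{(-1)}^{(d)}-\beta_{(1)}^{(d)}}; \] in particular this expression is a (nonnegative) integer. (3) If $\beta_{(-1)}^{(d)}-\beta_{(1)}^{(d)}=0$, then $\beta_{(-1)}^{(d)}+\beta_{(1)}^{(d)}\neq0$ and \[ \left(\beta_{(-1)}^{(d-2)}+\beta_{(0)}^{(d-2)}+\beta_{(1)}^{(d-2)}\right)+d_{f}\left(-\beta_{(-1)}^{(d-1)}+\beta_{(1)}^{(d-1)}\right)+\binom{d_{f}}{2}\left(\beta_{(-1)}^{(d)}+\beta_{(1)}^{(d)}\right)=0, \] which is a nontrivial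 quadratic equation in $d_{f}$. *)

theory Defs
  imports Complex_Main "HOL-Computational_Algebra.Polynomial"
begin

definition cf :: "complex poly \<Rightarrow> int \<Rightarrow> complex" where
  "cf p j = (if j < 0 then 0 else coeff p (nat j))"

end

theory Submission
  imports Defs
begin

(* Let n = deg f and let a, a', a'' be the coefficients of x^n, x^(n-1), x^(n-2) in f.
   By the binomial theorem, the corresponding coefficients of f(x + c) are a, a' + n c a and
   a'' + (n - 1) c a' + (n choose 2) c^2 a.  Hence the coefficient of x^(n+d-k) in
   f(x+1) b1 + f b0 + f(x-1) bm1 is, for k = 0, 1, 2, the leading coefficient a times the
   k-th relation of the statement plus multiples of a' and a'' by expressions that vanish
   once the earlier relations hold (for k = 2, when the top coefficients of b1 and bm1
   agree).  As a is nonzero, the relations follow one after the other. *)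

lemma cf_int [simp]: "cf p (int j) = coeff p j"
  by (simp add: cf_def)

lemma cf_neg: "j < 0 \<Longrightarrow> cf p j = 0"
  by (simp add: cf_def)

lemma cf_above_degree: "int (degree p) < j \<Longrightarrow> cf p j = 0"
  by (simp add: cf_def coeff_eq_0 nat_less_iff)

lemma cf_0 [simp]: "cf 0 j = 0"
  by (simp add: cf_def)

lemma cf_add [simp]: "cf (p + q) j = cf p j + cf q j"
  by (simp add: cf_def)

lemma cf_pCons: "cf (pCons a p) j = (if j = 0 then a else cf p (j - 1))"
  by (auto simp: cf_def coeff_pCons nat_diff_distrib' split: nat.splits)

lemma cf_mult:
  assumes "degree p \<le> m" "degree q \<le> e"
  shows "cf (p * q) N = (\<Sum>i\<in>{N - int e..int m}. cf p i * cf q (N - i))"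
proof (cases "N < 0")
  case True
  then have "cf p i * cf q (N - i) = 0" for i
    by (cases "i < 0") (simp_all add: cf_neg)
  with True show ?thesis by (simp add: cf_neg sum.neutral del: mult_eq_0_iff)
next
  case False
  define g where "g i = cf p i * cf q (N - i)" for i
  have "cf (p * q) N = (\<Sum>i\<le>nat N. coeff p i * coeff q (nat N - i))"
    using False by (simp add: cf_def coeff_mult)
  also have "\<dots> = (\<Sum>i\<le>nat N. g (int i))"
    using False by (intro sum.cong) (auto simp: g_def cf_def nat_diff_distrib)
  also have "\<dots> = sum g {0..N}"
    by (rule sum.reindex_bij_witness[of _ nat int]) (use False in auto)
  also have "\<dots> = sum g {min 0 (N - int e)..max N (int m)}"
    by (rule sum.mono_neutral_left) (auto simp: g_def cf_neg)
  also have "\<dots> = sum g {N - int e..int m}"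
    by (rule sum.mono_neutral_right)
       (use assms in \<open>auto simp: g_def intro!: cf_above_degree\<close>)
  finally show ?thesis by (simp add: g_def)
qed

lemma cf_mult_top:
  assumes "degree p \<le> m" "degree q \<le> e"
  shows "cf (p * q) (int m + int e - int k)
           = (\<Sum>i\<le>k. cf p (int m - int i) * cf q (int e - int (k - i)))"
proof -
  have "cf (p * q) (int m + int e - int k)
          = (\<Sum>j\<in>{int m - int k..int m}. cf p j * cf q (int m + int e - int k - j))"
    using cf_mult[OF assms] by simp
  also have "\<dots> = (\<Sum>i\<le>k. cf p (int m - int i) * cf q (int e - int (k - i)))"
    by (rule sum.reindex_bij_witness[of _ "\<lambda>i. int m - int i" "\<lambda>j. nat (int m - j)"])
       (auto simp: of_nat_diff algebra_simps)
  finally show ?thesis .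
qed

lemma cf_pcompose_pCons_linear:
  "cf (pcompose (pCons a p) [:c, 1:]) j
     = (if j = 0 then a else 0) + c * cf (pcompose p [:c, 1:]) j + cf (pcompose p [:c, 1:]) (j - 1)"
proof -
  have "pcompose (pCons a p) [:c, 1:]
          = [:a:] + smult c (pcompose p [:c, 1:]) + pCons 0 (pcompose p [:c, 1:])"
    by (simp add: pcompose_pCons mult_pCons_left)
  then show ?thesis
    by (simp add: cf_pCons) (simp add: cf_def)
qed

lemma cf_pcompose_linear_top:
  assumes "degree p \<le> n"
  shows "cf (pcompose p [:c, 1:]) (int n) = cf p (int n)" (is ?top)
    and "cf (pcompose p [:c, 1:]) (int n - 1) = cf p (int n - 1) + of_nat n * c * cf p (int n)"
      (is ?second)
    and "cf (pcompose p [:c, 1:]) (int n - 2)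
           = cf p (int n - 2) + (of_nat n - 1) * c * cf p (int n - 1)
             + of_nat (n choose 2) * c\<^sup>2 * cf p (int n)" (is ?third)
proof -
  let ?q = "\<lambda>p. pcompose p [:c, 1:]"
  have "?top \<and> ?second \<and> ?third"
    using assms
  proof (induction p arbitrary: n)
    case 0
    then show ?case by (simp add: cf_def)
  next
    case (pCons a g)
    show ?case
    proof (cases n)
      case 0
      with pCons have "g = 0" by (auto split: if_splits)
      with 0 show ?thesis by (simp add: cf_pcompose_pCons_linear cf_pCons cf_neg)
    next
      case (Suc m)
      with pCons have "degree g \<le> m" by (auto split: if_splits)
      note IH = pCons.IH[OF this]
      have "cf (?q g) (int m + 1) = 0"
        using \<open>degree g \<le> m\<close> by (intro cf_above_degree) (simp add: degree_pcompose)
      moreover have "Suc m choose 2 = (m choose 2) + m"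
        by (simp add: numeral_2_eq_2)
      moreover have idx: "int n = int m + 1" "int n - 1 = int m" "int n - 2 = int m - 1"
        "int m + 1 - 1 = int m" "int m - 1 - 1 = int m - 2"
        using Suc by simp_all
      ultimately show ?thesis
        unfolding idx cf_pcompose_pCons_linear cf_pCons
        using IH Suc by (auto simp: algebra_simps power2_eq_square cf_neg)
    qed
  qed
  then show ?top ?second ?third
    by auto
qed

definition shift_op :: "complex poly \<Rightarrow> complex poly \<Rightarrow> complex poly \<Rightarrow> complex poly \<Rightarrow> complex poly" where
  "shift_op bm1 b0 b1 f = pcompose f [:1, 1:] * b1 + f * b0 + pcompose f [:-1, 1:] * bm1"

lemma poly_shift_op:
  "poly (shift_op bm1 b0 b1 f) x
     = poly f (x + 1) * poly b1 x + poly f x * poly b0 x + poly f (x - 1) * poly bm1 x"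
  by (simp add: shift_op_def poly_pcompose add.commute)

lemma cf_shift_op:
  assumes "degree f \<le> n" "degree bm1 \<le> d" "degree b0 \<le> d" "degree b1 \<le> d"
  shows "cf (shift_op bm1 b0 b1 f) (int n + int d - int k)
      = (\<Sum>i\<le>k. cf (pcompose f [:1, 1:]) (int n - int i) * cf b1 (int d - int (k - i))
                 + cf f (int n - int i) * cf b0 (int d - int (k - i))
                 + cf (pcompose f [:-1, 1:]) (int n - int i) * cf bm1 (int d - int (k - i)))"
  using assms by (simp add: shift_op_def degree_pcompose cf_mult_top sum.distrib)

lemma cf_shift_op_top:
  assumes "degree f \<le> n" "degree bm1 \<le> d" "degree b0 \<le> d" "degree b1 \<le> d"
  shows "cf (shift_op bm1 b0 b1 f) (int n + int d) = cf f n * (cf bm1 d + cf b0 d + cf b1 d)"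
    and "cf (shift_op bm1 b0 b1 f) (int n + int d - 1)
           = cf f n * (cf bm1 (int d - 1) + cf b0 (int d - 1) + cf b1 (int d - 1)
                       + of_nat n * (cf b1 d - cf bm1 d))
             + cf f (int n - 1) * (cf bm1 d + cf b0 d + cf b1 d)"
    and "cf (shift_op bm1 b0 b1 f) (int n + int d - 2)
           = cf f n * (cf bm1 (int d - 2) + cf b0 (int d - 2) + cf b1 (int d - 2)
                       + of_nat n * (cf b1 (int d - 1) - cf bm1 (int d - 1))
                       + of_nat (n choose 2) * (cf bm1 d + cf b1 d))
             + cf f (int n - 1) * (cf bm1 (int d - 1) + cf b0 (int d - 1) + cf b1 (int d - 1)
                                   + (of_nat n - 1) * (cf b1 d - cf bm1 d))
             + cf f (int n - 2) * (cf bm1 d + cf b0 d + cf b1 d)"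
  using cf_shift_op[OF assms, of 0] cf_shift_op[OF assms, of 1] cf_shift_op[OF assms, of 2]
    cf_pcompose_linear_top[OF assms(1), of 1] cf_pcompose_linear_top[OF assms(1), of "-1"]
  by (simp_all add: numeral_2_eq_2 algebra_simps)

lemma shift_op_eq_0_coeff_relations:
  assumes "shift_op bm1 b0 b1 f = 0" "f \<noteq> 0"
    and "degree bm1 \<le> d" "degree b0 \<le> d" "degree b1 \<le> d"
  shows "cf bm1 d + cf b0 d + cf b1 d = 0"
    and "cf bm1 (int d - 1) + cf b0 (int d - 1) + cf b1 (int d - 1)
           = of_nat (degree f) * (cf bm1 d - cf b1 d)"
    and "cf bm1 d = cf b1 d \<Longrightarrow>
           (cf bm1 (int d - 2) + cf b0 (int d - 2) + cf b1 (int d - 2))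
           + of_nat (degree f) * (- cf bm1 (int d - 1) + cf b1 (int d - 1))
           + of_nat (degree f choose 2) * (cf bm1 d + cf b1 d) = 0"
proof -
  note top = cf_shift_op_top[OF order.refl assms(3-5), of f, unfolded assms(1) cf_0]
  have lead: "cf f (degree f) \<noteq> 0"
    using assms(2) by simp
  show sum_top: "cf bm1 d + cf b0 d + cf b1 d = 0"
    using top(1) lead by simp
  have "cf f (degree f) * (cf bm1 (int d - 1) + cf b0 (int d - 1) + cf b1 (int d - 1)
          + of_nat (degree f) * (cf b1 d - cf bm1 d)) = 0"
    using top(2) sum_top by simp
  with lead have "cf bm1 (int d - 1) + cf b0 (int d - 1) + cf b1 (int d - 1)
          + of_nat (degree f) * (cf b1 d - cf bm1 d) = 0"
    by simp
  then show sum_second: "cf bm1 (int d - 1) + cf b0 (int d - 1) + cf b1 (int d - 1)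
           = of_nat (degree f) * (cf bm1 d - cf b1 d)"
    by algebra
  assume "cf bm1 d = cf b1 d"
  then have "cf b1 d - cf bm1 d = 0" "cf bm1 (int d - 1) + cf b0 (int d - 1) + cf b1 (int d - 1) = 0"
    using sum_second by simp_all
  then have "cf f (degree f) * ((cf bm1 (int d - 2) + cf b0 (int d - 2) + cf b1 (int d - 2))
           + of_nat (degree f) * (- cf bm1 (int d - 1) + cf b1 (int d - 1))
           + of_nat (degree f choose 2) * (cf bm1 d + cf b1 d)) = 0"
    using top(3) sum_top by simp
  then show "(cf bm1 (int d - 2) + cf b0 (int d - 2) + cf b1 (int d - 2))
           + of_nat (degree f) * (- cf bm1 (int d - 1) + cf b1 (int d - 1))
           + of_nat (degree f choose 2) * (cf bm1 d + cf b1 d) = 0"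
    using lead by simp
qed

lemma cf_degree_nonzero_iff:
  assumes "p \<noteq> 0" "degree p \<le> d"
  shows "cf p (int d) \<noteq> 0 \<longleftrightarrow> degree p = d"
  using assms le_degree by fastforce

theorem lemma29:
  fixes f bm1 b0 b1 :: "complex poly" and d :: nat
  assumes "f \<noteq> 0" "bm1 \<noteq> 0" "b0 \<noteq> 0" "b1 \<noteq> 0"
    and rec: "\<forall>x::complex. poly f (x + 1) * poly b1 x + poly f x * poly b0 x
                 + poly f (x - 1) * poly bm1 x = 0"
    and d_def: "d = max (degree bm1) (max (degree b0) (degree b1))"
  shows "(cf bm1 d + cf b0 d + cf b1 d = 0
          \<and> ((degree bm1 = d \<and> degree b0 = d) \<or> (degree bm1 = d \<and> degree b1 = d)
             \<or> (degree b0 = d \<and> degree b1 = d)))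
       \<and> (cf bm1 d - cf b1 d \<noteq> 0 \<longrightarrow>
            of_nat (degree f) = (cf bm1 (int d - 1) + cf b0 (int d - 1) + cf b1 (int d - 1))
                                / (cf bm1 d - cf b1 d))
       \<and> (cf bm1 d - cf b1 d = 0 \<longrightarrow>
            cf bm1 d + cf b1 d \<noteq> 0 \<and>
            (cf bm1 (int d - 2) + cf b0 (int d - 2) + cf b1 (int d - 2))
            + of_nat (degree f) * (- cf bm1 (int d - 1) + cf b1 (int d - 1))
            + of_nat (degree f choose 2) * (cf bm1 d + cf b1 d) = 0)"
proof -
  have deg: "degree bm1 \<le> d" "degree b0 \<le> d" "degree b1 \<le> d"
    using d_def by auto
  have "shift_op bm1 b0 b1 f = 0"
    using rec by (intro poly_ext) (simp add: poly_shift_op)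
  note rel = shift_op_eq_0_coeff_relations[OF this \<open>f \<noteq> 0\<close> deg]
  have top_iff: "cf bm1 d \<noteq> 0 \<longleftrightarrow> degree bm1 = d" "cf b0 d \<noteq> 0 \<longleftrightarrow> degree b0 = d"
      "cf b1 d \<noteq> 0 \<longleftrightarrow> degree b1 = d"
    using cf_degree_nonzero_iff assms(2-4) deg by blast+
  have "degree bm1 = d \<or> degree b0 = d \<or> degree b1 = d"
    using d_def by linarith
  then show ?thesis
    using rel top_iff by (auto simp: field_simps add_eq_0_iff2)
qed

end
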